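(* Let $U$ be a finite set of men and $W_1\subseteq W_2$ finite sets of women, with each man having a strict total order over $W_2$ and each woman a strict total order over $U$. Let $\Delta_1$ be the set of stable matchings of the instance $(U,W_1)$ and $\Delta_2$ the set of stable matchings of the instance $(U,W_2)$. Let $(M_1,M_2)\in\Delta_1\times\Delta_2$ and let $M_1'\in\Delta_1$ be such that $M_1'$ men-dominates $M_1$. Then there exists $M_2'\in\Delta_2$ such that $|M_1'\setminus M_2'|\le |M_1\setminus M_2|$.
   Context: A matching between a set of men $U$ and a set of women $W$ is a set of pairs $(u,w)\in U\times W$ such that every person belongs to at most one pair; if $(u,w)$ is in the matching, $w$ is the partner of $u$ and vice versa. Preferences are strict total orders; for an instance $(U,W')$ with $W'\subseteq W_2$, the preferences are the restrictions of the given ones. A blocking pair of a matching $M$ is a pair $(u,w)\notin M$ such that ($u$ is unmatched in $M$ or $u$ prefers $w$ to his partner in $M$) and ($w$ is unmatched in $M$ or $w$ prefers $u$ to her partner in $M$). A matching is stable if it has no blocking pair. Given two stable matchings $M,M'$ of the same instance, $M$ men-dominates $M'$ if every man's partner in $M$ is at least as good for him as his partner in $M'$ (in particular he is matched in $M$ whenever matched in $M'$). Matchings are viewed as sets of pairs, so $|M_1\setminus M_2|$ is the number of pairs of $M_1$ not in $M_2$. *)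

theory Defs
  imports Main
begin

text \<open>Preferences: (w, w') \<in> PM u means man u strictly prefers w to w';
  (u, u') \<in> PW w means woman w strictly prefers u to u'.\<close>

definition matching :: "'m set \<Rightarrow> 'w set \<Rightarrow> ('m \<times> 'w) set \<Rightarrow> bool" where
  "matching U W M \<longleftrightarrow> M \<subseteq> U \<times> W \<and>
     (\<forall>u w w'. (u, w) \<in> M \<and> (u, w') \<in> M \<longrightarrow> w = w') \<and>
     (\<forall>u u' w. (u, w) \<in> M \<and> (u', w) \<in> M \<longrightarrow> u = u')"

definition unmatched_man :: "('m \<times> 'w) set \<Rightarrow> 'm \<Rightarrow> bool" where
  "unmatched_man M u \<longleftrightarrow> (\<forall>w. (u, w) \<notin> M)"

definition unmatched_woman :: "('m \<times> 'w) set \<Rightarrow> 'w \<Rightarrow> bool" where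
  "unmatched_woman M w \<longleftrightarrow> (\<forall>u. (u, w) \<notin> M)"

definition blocking_pair ::
  "('m \<Rightarrow> ('w \<times> 'w) set) \<Rightarrow> ('w \<Rightarrow> ('m \<times> 'm) set) \<Rightarrow> ('m \<times> 'w) set \<Rightarrow> 'm \<Rightarrow> 'w \<Rightarrow> bool" where
  "blocking_pair PM PW M u w \<longleftrightarrow> (u, w) \<notin> M \<and>
     (unmatched_man M u \<or> (\<exists>w'. (u, w') \<in> M \<and> (w, w') \<in> PM u)) \<and>
     (unmatched_woman M w \<or> (\<exists>u'. (u', w) \<in> M \<and> (u, u') \<in> PW w))"

definition stable ::
  "'m set \<Rightarrow> 'w set \<Rightarrow> ('m \<Rightarrow> ('w \<times> 'w) set) \<Rightarrow> ('w \<Rightarrow> ('m \<times> 'm) set) \<Rightarrow> ('m \<times> 'w) set \<Rightarrow> bool" where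
  "stable U W PM PW M \<longleftrightarrow> matching U W M \<and>
     (\<forall>u\<in>U. \<forall>w\<in>W. \<not> blocking_pair PM PW M u w)"

definition men_dominates ::
  "'m set \<Rightarrow> ('m \<Rightarrow> ('w \<times> 'w) set) \<Rightarrow> ('m \<times> 'w) set \<Rightarrow> ('m \<times> 'w) set \<Rightarrow> bool" where
  "men_dominates U PM M M' \<longleftrightarrow>
     (\<forall>u\<in>U. \<forall>w'. (u, w') \<in> M' \<longrightarrow> (\<exists>w. (u, w) \<in> M \<and> (w = w' \<or> (w, w') \<in> PM u)))"

end

theory Submission
  imports Defs
begin

text \<open>Take for \<open>M\<^sub>2'\<close> the men-join of \<open>M\<^sub>1'\<close> and \<open>M\<^sub>2\<close>: every man keeps whichever of his two
  partners he prefers. As for the join in the lattice of stable matchings of one instance, the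
  men who prefer their \<open>M\<^sub>1'\<close>-partner are matched to the same set of women in \<open>M\<^sub>1'\<close> and in \<open>M\<^sub>2\<close>,
  which makes the join a stable matching of the larger instance. Since \<open>M\<^sub>1'\<close> men-dominates the
  stable matching \<open>M\<^sub>1\<close>, it matches at least the men and at most the women of \<open>M\<^sub>1\<close>, so
  \<open>|M\<^sub>1'| = |M\<^sub>1|\<close>; and every man of a pair in \<open>M\<^sub>1 \<inter> M\<^sub>2\<close> lies in a pair of \<open>M\<^sub>1'\<close> kept by the
  join.\<close>

definition man_would_switch :: "('m \<Rightarrow> ('w \<times> 'w) set) \<Rightarrow> ('m \<times> 'w) set \<Rightarrow> 'm \<Rightarrow> 'w \<Rightarrow> bool" where
  "man_would_switch PM M u w \<longleftrightarrow> unmatched_man M u \<or> (\<exists>w'. (u, w') \<in> M \<and> (w, w') \<in> PM u)"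

definition woman_would_switch :: "('w \<Rightarrow> ('m \<times> 'm) set) \<Rightarrow> ('m \<times> 'w) set \<Rightarrow> 'm \<Rightarrow> 'w \<Rightarrow> bool" where
  "woman_would_switch PW M u w \<longleftrightarrow> unmatched_woman M w \<or> (\<exists>u'. (u', w) \<in> M \<and> (u, u') \<in> PW w)"

lemma blocking_pair_iff:
  "blocking_pair PM PW M u w \<longleftrightarrow>
     (u, w) \<notin> M \<and> man_would_switch PM M u w \<and> woman_would_switch PW M u w"
  by (simp add: blocking_pair_def man_would_switch_def woman_would_switch_def)

lemma matching_subset: "matching U W M \<Longrightarrow> M \<subseteq> U \<times> W"
  by (simp add: matching_def)

lemma matching_man_unique: "matching U W M \<Longrightarrow> (u, w) \<in> M \<Longrightarrow> (u, w') \<in> M \<Longrightarrow> w = w'"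
  by (simp add: matching_def)

lemma matching_woman_unique: "matching U W M \<Longrightarrow> (u, w) \<in> M \<Longrightarrow> (u', w) \<in> M \<Longrightarrow> u = u'"
  unfolding matching_def by blast

lemma matching_inj_on_fst: "matching U W M \<Longrightarrow> inj_on fst M"
  by (rule inj_onI) (metis matching_man_unique prod.collapse)

lemma matching_inj_on_snd: "matching U W M \<Longrightarrow> inj_on snd M"
  by (rule inj_onI) (metis matching_woman_unique prod.collapse)

lemma matching_mono: "matching U W M \<Longrightarrow> W \<subseteq> W' \<Longrightarrow> matching U W' M"
  by (auto simp: matching_def)

lemma finite_matching: "matching U W M \<Longrightarrow> finite U \<Longrightarrow> finite W \<Longrightarrow> finite M"
  by (metis finite_SigmaI finite_subset matching_subset)

lemma stable_matching: "stable U W PM PW M \<Longrightarrow> matching U W M"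
  by (simp add: stable_def)

lemma stable_not_blocking:
  "stable U W PM PW M \<Longrightarrow> u \<in> U \<Longrightarrow> w \<in> W \<Longrightarrow> \<not> blocking_pair PM PW M u w"
  by (simp add: stable_def)

lemma card_eq_if_men_dominates:
  assumes M': "matching U W M'" and M: "stable U W PM PW M"
    and dom: "men_dominates U PM M' M" and "finite U" "finite W"
  shows "card M' = card M"
proof -
  have fin: "finite M'" "finite M"
    using assms finite_matching stable_matching by blast+
  have "fst ` M \<subseteq> fst ` M'"
    using dom matching_subset[OF stable_matching[OF M]] unfolding men_dominates_def by force
  moreover have "snd ` M' \<subseteq> snd ` M"
  proof
    fix w assume "w \<in> snd ` M'"
    then obtain u where uw: "(u, w) \<in> M'" by auto
    show "w \<in> snd ` M"
    proof (rule ccontr)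
      assume unmatched: "w \<notin> snd ` M"
      have "man_would_switch PM M u w"
      proof (cases "unmatched_man M u")
        case False
        then obtain w1 where w1: "(u, w1) \<in> M" by (auto simp: unmatched_man_def)
        moreover have "u \<in> U" using uw matching_subset[OF M'] by auto
        ultimately obtain w2 where "(u, w2) \<in> M'" "w2 = w1 \<or> (w2, w1) \<in> PM u"
          using dom unfolding men_dominates_def by blast
        moreover have "w2 = w" using matching_man_unique[OF M' uw] calculation(1) by blast
        moreover have "w1 \<noteq> w" using unmatched w1 by force
        ultimately show ?thesis using w1 unfolding man_would_switch_def by blast
      qed (simp add: man_would_switch_def)
      moreover have "(u, w) \<notin> M" "woman_would_switch PW M u w"
        using unmatched by (force simp: woman_would_switch_def unmatched_woman_def)+
      moreover have "u \<in> U" "w \<in> W" using uw matching_subset[OF M'] by auto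
      ultimately show False using stable_not_blocking[OF M] by (auto simp: blocking_pair_iff)
    qed
  qed
  ultimately have "card (fst ` M) \<le> card (fst ` M')" "card (snd ` M') \<le> card (snd ` M)"
    using fin by (simp_all add: card_mono)
  then show ?thesis
    using M' stable_matching[OF M]
    by (simp add: card_image matching_inj_on_fst matching_inj_on_snd)
qed

definition men_preferring :: "('m \<Rightarrow> ('w \<times> 'w) set) \<Rightarrow> ('m \<times> 'w) set \<Rightarrow> ('m \<times> 'w) set \<Rightarrow> 'm set" where
  "men_preferring PM A B = {u. \<exists>w. (u, w) \<in> A \<and> (\<forall>w'. (u, w') \<in> B \<longrightarrow> (w, w') \<in> PM u)}"

definition men_join :: "('m \<Rightarrow> ('w \<times> 'w) set) \<Rightarrow> ('m \<times> 'w) set \<Rightarrow> ('m \<times> 'w) set \<Rightarrow> ('m \<times> 'w) set" where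
  "men_join PM A B =
     {p \<in> A. fst p \<in> men_preferring PM A B} \<union> {p \<in> B. fst p \<notin> men_preferring PM A B}"

lemma mem_men_join_iff:
  "(u, w) \<in> men_join PM A B \<longleftrightarrow>
     (if u \<in> men_preferring PM A B then (u, w) \<in> A else (u, w) \<in> B)"
  by (auto simp: men_join_def)

lemma card_Int_le_card_Int_men_join:
  assumes M: "matching U W M" and A: "matching U W A" and B: "matching U W' B"
    and dom: "men_dominates U PM A M" and "finite A"
  shows "card (M \<inter> B) \<le> card (A \<inter> men_join PM A B)"
proof -
  have "fst ` (M \<inter> B) \<subseteq> fst ` (A \<inter> men_join PM A B)"
  proof
    fix u assume "u \<in> fst ` (M \<inter> B)"
    then obtain w where w: "(u, w) \<in> M" "(u, w) \<in> B" by auto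
    moreover have "u \<in> U" using w matching_subset[OF M] by auto
    ultimately obtain w0 where w0: "(u, w0) \<in> A" "w0 = w \<or> (w0, w) \<in> PM u"
      using dom unfolding men_dominates_def by blast
    have "(u, w0) \<in> men_join PM A B"
    proof (cases "u \<in> men_preferring PM A B")
      case False
      then have "w0 = w"
        using w0 matching_man_unique[OF B w(2)] unfolding men_preferring_def by blast
      with False w(2) show ?thesis by (simp add: mem_men_join_iff)
    qed (simp add: mem_men_join_iff w0(1))
    with w0(1) show "u \<in> fst ` (A \<inter> men_join PM A B)" by force
  qed
  then have "card (fst ` (M \<inter> B)) \<le> card (fst ` (A \<inter> men_join PM A B))"
    using \<open>finite A\<close> by (simp add: card_mono)
  then show ?thesis
    using inj_on_subset[OF matching_inj_on_fst[OF M]] inj_on_subset[OF matching_inj_on_fst[OF A]]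
    by (simp add: card_image)
qed

locale men_join_setting =
  fixes U :: "'m set" and W1 W2 :: "'w set"
    and PM :: "'m \<Rightarrow> ('w \<times> 'w) set" and PW :: "'w \<Rightarrow> ('m \<times> 'm) set"
    and A B :: "('m \<times> 'w) set"
  assumes W1_subset_W2: "W1 \<subseteq> W2"
    and men_orders: "\<forall>u\<in>U. strict_linear_order_on W2 (PM u)"
    and women_orders: "\<forall>w\<in>W2. strict_linear_order_on U (PW w)"
    and stable_A: "stable U W1 PM PW A"
    and stable_B: "stable U W2 PM PW B"
begin

lemma men_pref_trans: "u \<in> U \<Longrightarrow> (a, b) \<in> PM u \<Longrightarrow> (b, c) \<in> PM u \<Longrightarrow> (a, c) \<in> PM u"
  using men_orders unfolding strict_linear_order_on_def trans_def by blast

lemma men_pref_irrefl: "u \<in> U \<Longrightarrow> (a, a) \<notin> PM u"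
  using men_orders unfolding strict_linear_order_on_def irrefl_def by blast

lemma men_pref_total:
  "u \<in> U \<Longrightarrow> a \<in> W2 \<Longrightarrow> b \<in> W2 \<Longrightarrow> a \<noteq> b \<Longrightarrow> (a, b) \<in> PM u \<or> (b, a) \<in> PM u"
  using men_orders unfolding strict_linear_order_on_def total_on_def by blast

lemma women_pref_irrefl: "w \<in> W2 \<Longrightarrow> (a, a) \<notin> PW w"
  using women_orders unfolding strict_linear_order_on_def irrefl_def by blast

lemma women_pref_total:
  "w \<in> W2 \<Longrightarrow> a \<in> U \<Longrightarrow> b \<in> U \<Longrightarrow> a \<noteq> b \<Longrightarrow> (a, b) \<in> PW w \<or> (b, a) \<in> PW w"
  using women_orders unfolding strict_linear_order_on_def total_on_def by blast

lemma matching_A: "matching U W2 A"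
  using matching_mono[OF stable_matching[OF stable_A] W1_subset_W2] .

lemma matching_B: "matching U W2 B"
  using stable_matching[OF stable_B] .

lemma preferring_partner_better:
  "u \<in> men_preferring PM A B \<Longrightarrow> (u, w) \<in> A \<Longrightarrow> (u, w') \<in> B \<Longrightarrow> (w, w') \<in> PM u"
  using matching_man_unique[OF matching_A] unfolding men_preferring_def by blast

lemma not_preferring_partner_better:
  assumes "u \<notin> men_preferring PM A B" and uw: "(u, w) \<in> A"
  shows "\<exists>w'. (u, w') \<in> B \<and> (w' = w \<or> (w', w) \<in> PM u)"
proof -
  obtain w' where w': "(u, w') \<in> B" "(w, w') \<notin> PM u"
    using assms unfolding men_preferring_def by blast
  moreover have "u \<in> U" "w \<in> W2" "w' \<in> W2"
    using uw w' matching_subset[OF matching_A] matching_subset[OF matching_B] by auto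
  ultimately show ?thesis using men_pref_total by blast
qed

lemma men_join_woman_unique:
  assumes uw: "(u, w) \<in> A" "u \<in> men_preferring PM A B"
    and u'w: "(u', w) \<in> B" "u' \<notin> men_preferring PM A B"
  shows "u = u'"
proof (rule ccontr)
  assume ne: "u \<noteq> u'"
  have U: "u \<in> U" "u' \<in> U" and W: "w \<in> W1" "w \<in> W2"
    using uw u'w matching_subset[OF stable_matching[OF stable_A]] matching_subset[OF matching_B]
    by auto
  have u_switch: "man_would_switch PM B u w"
    using preferring_partner_better[OF uw(2,1)] by (auto simp: man_would_switch_def unmatched_man_def)
  have u'_switch: "man_would_switch PM A u' w"
  proof (cases "unmatched_man A u'")
    case False
    then obtain w' where w': "(u', w') \<in> A" by (auto simp: unmatched_man_def)
    then have "w' \<noteq> w" using matching_woman_unique[OF matching_A uw(1)] ne by blast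
    moreover obtain w'' where "(u', w'') \<in> B" "w'' = w' \<or> (w'', w') \<in> PM u'"
      using not_preferring_partner_better[OF u'w(2) w'] by blast
    moreover have "w'' = w" using matching_man_unique[OF matching_B u'w(1)] calculation(2) by blast
    ultimately show ?thesis using w' by (auto simp: man_would_switch_def)
  qed (simp add: man_would_switch_def)
  have "(u, w) \<notin> B" "(u', w) \<notin> A"
    using ne matching_woman_unique[OF matching_A uw(1)] matching_woman_unique[OF matching_B u'w(1)]
    by blast+
  from women_pref_total[OF W(2) U ne] show False
  proof
    assume "(u, u') \<in> PW w"
    then have "blocking_pair PM PW B u w"
      using u_switch \<open>(u, w) \<notin> B\<close> u'w(1) by (auto simp: blocking_pair_iff woman_would_switch_def)
    with stable_not_blocking[OF stable_B U(1) W(2)] show False ..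
  next
    assume "(u', u) \<in> PW w"
    then have "blocking_pair PM PW A u' w"
      using u'_switch \<open>(u', w) \<notin> A\<close> uw(1) by (auto simp: blocking_pair_iff woman_would_switch_def)
    with stable_not_blocking[OF stable_A U(2) W(1)] show False ..
  qed
qed

lemma men_join_matching: "matching U W2 (men_join PM A B)"
  unfolding matching_def
proof (intro conjI allI impI)
  show "men_join PM A B \<subseteq> U \<times> W2"
    using matching_subset[OF matching_A] matching_subset[OF matching_B] by (auto simp: men_join_def)
next
  fix u w w' assume "(u, w) \<in> men_join PM A B \<and> (u, w') \<in> men_join PM A B"
  then show "w = w'"
    using matching_man_unique[OF matching_A] matching_man_unique[OF matching_B]
    by (auto simp: mem_men_join_iff split: if_splits)
next
  fix u u' w assume "(u, w) \<in> men_join PM A B \<and> (u', w) \<in> men_join PM A B"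
  then show "u = u'"
    using matching_woman_unique[OF matching_A] matching_woman_unique[OF matching_B]
      men_join_woman_unique men_join_woman_unique[symmetric]
    by (auto simp: mem_men_join_iff split: if_splits)
qed

lemma preferring_men_same_women:
  assumes "finite U" "finite W2"
  shows "A `` men_preferring PM A B = B `` men_preferring PM A B"
proof -
  let ?D = "men_preferring PM A B"
  have sub: "A `` ?D \<subseteq> B `` ?D"
  proof
    fix w assume "w \<in> A `` ?D"
    then obtain u where uw: "(u, w) \<in> A" "u \<in> ?D" by auto
    have U: "u \<in> U" "w \<in> W2" using uw matching_subset[OF matching_A] by auto
    have "(u, w) \<notin> B" using preferring_partner_better[OF uw(2,1)] men_pref_irrefl[OF U(1)] by blast
    moreover have "man_would_switch PM B u w"
      using preferring_partner_better[OF uw(2,1)] by (auto simp: man_would_switch_def unmatched_man_def)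
    ultimately obtain u4 where u4: "(u4, w) \<in> B"
      using stable_not_blocking[OF stable_B U]
      by (auto simp: blocking_pair_iff woman_would_switch_def unmatched_woman_def)
    have "u4 \<in> ?D"
    proof (rule ccontr)
      assume "u4 \<notin> ?D"
      then have "u4 = u"
        using u4 uw matching_woman_unique[OF men_join_matching] by (simp add: mem_men_join_iff)
      with \<open>(u, w) \<notin> B\<close> u4 show False by simp
    qed
    with u4 show "w \<in> B `` ?D" by auto
  qed
  have fin: "finite A" "finite B"
    using assms matching_A matching_B finite_matching by blast+
  have D_eq: "?D = fst ` (A \<inter> ?D \<times> UNIV)"
    by (force simp: men_preferring_def)
  have "finite ?D" using D_eq fin(1) by (metis finite_Int finite_imageI)
  have "card (A `` ?D) = card ?D"
  proof -
    have "A `` ?D = snd ` (A \<inter> ?D \<times> UNIV)" by force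
    with D_eq show ?thesis
      using inj_on_subset[OF matching_inj_on_fst[OF matching_A]]
        inj_on_subset[OF matching_inj_on_snd[OF matching_A]]
      by (metis Int_lower1 card_image)
  qed
  moreover have "card (B `` ?D) \<le> card ?D"
  proof -
    have "B `` ?D = snd ` (B \<inter> ?D \<times> UNIV)" by force
    then have "card (B `` ?D) \<le> card (B \<inter> ?D \<times> UNIV)" using fin by (simp add: card_image_le)
    also have "\<dots> = card (fst ` (B \<inter> ?D \<times> UNIV))"
      using inj_on_subset[OF matching_inj_on_fst[OF matching_B]] by (simp add: card_image)
    also have "\<dots> \<le> card ?D"
      using \<open>finite ?D\<close> by (intro card_mono) auto
    finally show ?thesis .
  qed
  moreover have "finite (B `` ?D)" using fin by (simp add: finite_Image)
  ultimately show ?thesis using sub card_mono[OF _ sub] card_subset_eq[OF _ sub] by (metis le_antisym)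
qed

lemma men_join_man_would_switch:
  assumes "u \<in> U" and switch: "man_would_switch PM (men_join PM A B) u w"
  shows "man_would_switch PM A u w \<and> man_would_switch PM B u w"
proof (cases "unmatched_man (men_join PM A B) u")
  case True
  have "u \<notin> men_preferring PM A B"
  proof
    assume D: "u \<in> men_preferring PM A B"
    then obtain w0 where "(u, w0) \<in> A" by (auto simp: men_preferring_def)
    with D True show False by (auto simp: unmatched_man_def mem_men_join_iff)
  qed
  with True have "unmatched_man B u" by (simp add: unmatched_man_def mem_men_join_iff)
  moreover have "unmatched_man A u"
    using not_preferring_partner_better[OF \<open>u \<notin> men_preferring PM A B\<close>] calculation
    by (auto simp: unmatched_man_def)
  ultimately show ?thesis by (simp add: man_would_switch_def)
next
  case False
  then obtain w' where w': "(u, w') \<in> men_join PM A B" "(w, w') \<in> PM u"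
    using switch by (auto simp: man_would_switch_def)
  show ?thesis
  proof (cases "u \<in> men_preferring PM A B")
    case True
    then have "(u, w') \<in> A" using w'(1) by (simp add: mem_men_join_iff)
    then show ?thesis
      using w'(2) preferring_partner_better[OF True] men_pref_trans[OF \<open>u \<in> U\<close>]
      by (auto simp: man_would_switch_def unmatched_man_def)
  next
    case False
    then have B: "(u, w') \<in> B" using w'(1) by (simp add: mem_men_join_iff)
    have "(w, w'') \<in> PM u" if "(u, w'') \<in> A" for w''
      using not_preferring_partner_better[OF False that] matching_man_unique[OF matching_B B]
        men_pref_trans[OF \<open>u \<in> U\<close> w'(2)] w'(2) by blast
    then show ?thesis using B w'(2) by (auto simp: man_would_switch_def unmatched_man_def)
  qed
qed

lemma men_join_stable:
  assumes "finite U" "finite W2"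
  shows "stable U W2 PM PW (men_join PM A B)"
  unfolding stable_def
proof (intro conjI men_join_matching ballI notI)
  let ?J = "men_join PM A B" and ?D = "men_preferring PM A B"
  fix u w assume U: "u \<in> U" "w \<in> W2" and "blocking_pair PM PW ?J u w"
  then have "man_would_switch PM ?J u w" and woman: "woman_would_switch PW ?J u w"
    by (simp_all add: blocking_pair_iff)
  then have man: "man_would_switch PM A u w" "man_would_switch PM B u w"
    using men_join_man_would_switch U(1) by blast+
  show False
  proof (cases "unmatched_woman ?J w")
    case False
    then obtain u' where u': "(u', w) \<in> ?J" "(u, u') \<in> PW w"
      using woman by (auto simp: woman_would_switch_def)
    then have "u \<noteq> u'" using women_pref_irrefl[OF U(2)] by blast
    show False
    proof (cases "u' \<in> ?D")
      case True
      then have "(u', w) \<in> A" using u'(1) by (simp add: mem_men_join_iff)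
      moreover have "w \<in> W1" using calculation stable_matching[OF stable_A] matching_subset by blast
      moreover have "(u, w) \<notin> A"
        using matching_woman_unique[OF matching_A] calculation(1) \<open>u \<noteq> u'\<close> by blast
      ultimately show False
        using man(1) u'(2) U(1) stable_not_blocking[OF stable_A]
        by (auto simp: blocking_pair_iff woman_would_switch_def)
    next
      case False
      then have "(u', w) \<in> B" using u'(1) by (simp add: mem_men_join_iff)
      moreover have "(u, w) \<notin> B"
        using matching_woman_unique[OF matching_B] calculation \<open>u \<noteq> u'\<close> by blast
      ultimately show False
        using man(2) u'(2) U stable_not_blocking[OF stable_B]
        by (auto simp: blocking_pair_iff woman_would_switch_def)
    qed
  next
    case True
    have "unmatched_woman B w"
    proof (unfold unmatched_woman_def, intro allI notI)
      fix u' assume u'w: "(u', w) \<in> B"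
      show False
      proof (cases "u' \<in> ?D")
        case True
        then have "w \<in> A `` ?D" using u'w preferring_men_same_women[OF assms] by auto
        then obtain x where "x \<in> ?D" "(x, w) \<in> A" by auto
        then have "(x, w) \<in> ?J" by (simp add: mem_men_join_iff)
        with \<open>unmatched_woman ?J w\<close> show False by (simp add: unmatched_woman_def)
      next
        case False
        with u'w have "(u', w) \<in> ?J" by (simp add: mem_men_join_iff)
        with \<open>unmatched_woman ?J w\<close> show False by (simp add: unmatched_woman_def)
      qed
    qed
    then have "blocking_pair PM PW B u w"
      using man(2) by (simp add: blocking_pair_iff woman_would_switch_def unmatched_woman_def)
    with stable_not_blocking[OF stable_B U] show False ..
  qed
qed

end

theorem mainTheorem1:
  fixes U :: "'m set" and W1 W2 :: "'w set"
    and PM :: "'m \<Rightarrow> ('w \<times> 'w) set" and PW :: "'w \<Rightarrow> ('m \<times> 'm) set"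
    and M1 M2 M1' :: "('m \<times> 'w) set"
  assumes "finite U" and "finite W2" and "W1 \<subseteq> W2"
    and "\<forall>u\<in>U. strict_linear_order_on W2 (PM u)"
    and "\<forall>w\<in>W2. strict_linear_order_on U (PW w)"
    and "stable U W1 PM PW M1"
    and "stable U W2 PM PW M2"
    and "stable U W1 PM PW M1'"
    and "men_dominates U PM M1' M1"
  shows "\<exists>M2'. stable U W2 PM PW M2' \<and> card (M1' - M2') \<le> card (M1 - M2)"
proof -
  interpret men_join_setting U W1 W2 PM PW M1' M2
    using assms by unfold_locales
  let ?M2' = "men_join PM M1' M2"
  have "finite W1" using assms(2,3) finite_subset by blast
  have M1': "matching U W1 M1'" and M1: "matching U W1 M1"
    using assms(6,8) stable_matching by blast+
  have fin: "finite M1'" "finite M1"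
    using M1' M1 \<open>finite U\<close> \<open>finite W1\<close> finite_matching by blast+
  have "card M1' = card M1"
    using card_eq_if_men_dominates[OF M1' assms(6,9)] \<open>finite U\<close> \<open>finite W1\<close> .
  moreover have "card (M1 \<inter> M2) \<le> card (M1' \<inter> ?M2')"
    using card_Int_le_card_Int_men_join[OF M1 M1' matching_B assms(9) fin(1)] .
  ultimately have "card (M1' - ?M2') \<le> card (M1 - M2)"
    using fin by (simp add: card_Diff_subset_Int card_mono diff_le_mono2)
  then show ?thesis
    using men_join_stable[OF assms(1,2)] by blast
qed

end
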